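(* Let $q:\mathbb{R}^{2n}\to\mathbb{C}$ be a quadratic form such that $\exp H_q$ is strictly positive. Then $q$ is supersymmetric.
   Context: Points of $\mathbb{C}^{2n}$ are written $\mathbf{z}=(x,\xi)$, and $\sigma((x_1,\xi_1),(x_2,\xi_2))=\xi_1\cdot x_2-\xi_2\cdot x_1$ (complex bilinear, no conjugation). A complex linear map $\mathbf{K}$ of $\mathbb{C}^{2n}$ is canonical if $\sigma(\mathbf{K}\mathbf{z},\mathbf{K}\mathbf{w})=\sigma(\mathbf{z},\mathbf{w})$ for all $\mathbf{z},\mathbf{w}$; it is strictly positive if it is canonical and $i\big(\sigma(\overline{\mathbf{K}\mathbf{z}},\mathbf{K}\mathbf{z})-\sigma(\overline{\mathbf{z}},\mathbf{z})\big)>0$ for all $\mathbf{z}\in\mathbb{C}^{2n}\setminus\{0\}$. For a quadratic form $q$ (extended holomorphically to $\mathbb{C}^{2n}$), its Hamilton map is the matrix $H_q=\begin{pmatrix} q''_{\xi x} & q''_{\xi\xi}\\ -q''_{xx} & -q''_{x\xi}\end{pmatrix}$. A quadratic form $q$ on $\mathbb{R}^{2n}$ is supersymmetric if $q(x,\xi)=B(\xi-G_+x)\cdot(\xi-G_-x)$ with $B\in\mathbb{C}^{n\times n}$ and $G_\pm\in\mathbb{C}^{n\times n}$ symmetric with $\pm\operatorname{Im}G_\pm$ positive definite. *)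

theory Defs
  imports "HOL-Analysis.Analysis" "HOL-Library.Complex_Order"
begin

text \<open>Points of C^{2n} are vectors indexed by 'n + 'n: index Inl i is x_i, index Inr i is xi_i.\<close>

definition symp_form :: "complex^('n::finite + 'n) \<Rightarrow> complex^('n + 'n) \<Rightarrow> complex" where
  "symp_form z w = (\<Sum>i\<in>UNIV. z $ Inr i * w $ Inl i - w $ Inr i * z $ Inl i)"

definition cconj :: "complex^'m::finite \<Rightarrow> complex^'m" where
  "cconj z = (\<chi> i. cnj (z $ i))"

definition canonical :: "complex^('n::finite + 'n)^('n + 'n) \<Rightarrow> bool" where
  "canonical K \<longleftrightarrow> (\<forall>z w. symp_form (K *v z) (K *v w) = symp_form z w)"

definition strictly_positive :: "complex^('n::finite + 'n)^('n + 'n) \<Rightarrow> bool" where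
  "strictly_positive K \<longleftrightarrow> canonical K \<and>
     (\<forall>z. z \<noteq> 0 \<longrightarrow>
        \<i> * (symp_form (cconj (K *v z)) (K *v z) - symp_form (cconj z) z) > 0)"

definition mpow :: "'a::comm_ring_1^'m::finite^'m \<Rightarrow> nat \<Rightarrow> 'a^'m^'m" where
  "mpow M k = ((\<lambda>A. A ** M) ^^ k) (mat 1)"

definition mexp :: "complex^'m::finite^'m \<Rightarrow> complex^'m^'m" where
  "mexp M = (\<Sum>k. (1 / fact k) *\<^sub>R mpow M k)"

definition quadratic_form :: "((real^'n::finite) \<times> (real^'n) \<Rightarrow> complex) \<Rightarrow> bool" where
  "quadratic_form q \<longleftrightarrow> (\<exists>A C D :: complex^'n^'n. \<forall>x \<xi>.
     q (x, \<xi>) = (\<Sum>i\<in>UNIV. \<Sum>j\<in>UNIV.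
        A $ i $ j * of_real (x $ i) * of_real (x $ j)
      + C $ i $ j * of_real (\<xi> $ i) * of_real (x $ j)
      + D $ i $ j * of_real (\<xi> $ i) * of_real (\<xi> $ j)))"

text \<open>Second derivative of a quadratic form in directions u, v (exact for quadratic forms).\<close>

definition d2 :: "('a::real_vector \<Rightarrow> complex) \<Rightarrow> 'a \<Rightarrow> 'a \<Rightarrow> complex" where
  "d2 q u v = q (u + v) - q u - q v"

definition ex :: "'n::finite \<Rightarrow> (real^'n) \<times> (real^'n)" where
  "ex i = (axis i 1, 0)"

definition exi :: "'n::finite \<Rightarrow> (real^'n) \<times> (real^'n)" where
  "exi i = (0, axis i 1)"

text \<open>Hamilton map H_q = [[q''_{xi x}, q''_{xi xi}], [-q''_{xx}, -q''_{x xi}]].\<close>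

definition hamilton_map :: "((real^'n::finite) \<times> (real^'n) \<Rightarrow> complex) \<Rightarrow> complex^('n + 'n)^('n + 'n)" where
  "hamilton_map q = (\<chi> a b. case (a, b) of
      (Inl i, Inl j) \<Rightarrow> d2 q (exi i) (ex j)
    | (Inl i, Inr j) \<Rightarrow> d2 q (exi i) (exi j)
    | (Inr i, Inl j) \<Rightarrow> - d2 q (ex i) (ex j)
    | (Inr i, Inr j) \<Rightarrow> - d2 q (ex i) (exi j))"

definition cvec :: "real^'n::finite \<Rightarrow> complex^'n" where
  "cvec x = (\<chi> i. complex_of_real (x $ i))"

definition bdot :: "complex^'n::finite \<Rightarrow> complex^'n \<Rightarrow> complex" where
  "bdot u v = (\<Sum>i\<in>UNIV. u $ i * v $ i)"

definition im_mat :: "complex^'n::finite^'n \<Rightarrow> real^'n^'n" where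
  "im_mat G = (\<chi> i j. Im (G $ i $ j))"

definition pos_def :: "real^'n::finite^'n \<Rightarrow> bool" where
  "pos_def M \<longleftrightarrow> (\<forall>y. y \<noteq> 0 \<longrightarrow> 0 < y \<bullet> (M *v y))"

definition supersymmetric :: "((real^'n::finite) \<times> (real^'n) \<Rightarrow> complex) \<Rightarrow> bool" where
  "supersymmetric q \<longleftrightarrow> (\<exists>B Gp Gm :: complex^'n^'n.
     transpose Gp = Gp \<and> transpose Gm = Gm \<and>
     pos_def (im_mat Gp) \<and> pos_def (- im_mat Gm) \<and>
     (\<forall>x \<xi>. q (x, \<xi>) = bdot (B *v (cvec \<xi> - Gp *v cvec x)) (cvec \<xi> - Gm *v cvec x)))"

end

theory Submission
  imports Defs
begin

text \<open>Let \<open>K = exp H\<^sub>q\<close> and \<open>h(z) = i \<sigma>(z\<^sup>*, z)\<close>. Strict positivity says that \<open>h\<close> strictly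
  increases along \<open>K\<close>, uniformly on the unit sphere. Hence vectors whose whole orbit keeps
  \<open>h \<le> 0\<close> tend to \<open>0\<close>; in the coordinates \<open>x \<pm> i\<xi>\<close> they form a limit of graphs of
  contractions, and projecting to \<open>x\<close> exhibits them as a Lagrangian graph \<open>\<xi> = G\<^sub>-x\<close> on which
  \<open>h < 0\<close>, i.e. \<open>Im G\<^sub>- < 0\<close>. The same construction for \<open>K\<^sup>-\<^sup>1\<close> gives \<open>\<xi> = G\<^sub>+x\<close> with
  \<open>Im G\<^sub>+ > 0\<close>. Since \<open>H\<^sub>q\<close> commutes with \<open>K\<close> it preserves both graphs, so \<open>q\<close>, the form
  \<open>\<sigma>(z, H\<^sub>q z)/2\<close>, vanishes on them; as they are transversal, \<open>q\<close> factorises as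
  \<open>B(\<xi> - G\<^sub>+x)\<cdot>(\<xi> - G\<^sub>-x)\<close>.\<close>

abbreviation vec_linear :: "('a::field^'m \<Rightarrow> 'a^'k) \<Rightarrow> bool" where
  "vec_linear f \<equiv> Vector_Spaces.linear (*s) (*s) f"

lemma vec_linear_compose: "vec_linear f \<Longrightarrow> vec_linear g \<Longrightarrow> vec_linear (\<lambda>x. f (g x))"
  using Vector_Spaces.linear_compose[of "(*s)" "(*s)" g "(*s)" f] by (simp add: o_def)

lemma vec_linear_funpow: "vec_linear (f :: 'a::field^'m \<Rightarrow> 'a^'m) \<Longrightarrow> vec_linear (f ^^ j)"
  by (induction j) (simp_all add: vec.linear_id vec_linear_compose[unfolded o_def[symmetric]])

lemma vec_linear_bij:
  fixes f :: "'a::field^'m::finite \<Rightarrow> 'a^'m"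
  assumes "vec_linear f" "inj f"
  obtains g where "vec_linear g" "\<And>x. g (f x) = x" "\<And>y. f (g y) = y"
  using vec.linear_injective_isomorphism[OF assms refl] by blast

lemma scaleR_vec_eq_scale: "r *\<^sub>R (w::complex^'m::finite) = complex_of_real r *s w"
  by (simp add: vec_eq_iff complex_eq_iff)

lemma vec_linear_scaleR:
  fixes f :: "complex^'m::finite \<Rightarrow> complex^'k::finite"
  shows "vec_linear f \<Longrightarrow> f (r *\<^sub>R v) = r *\<^sub>R f v"
  by (simp add: scaleR_vec_eq_scale vec.linear_scale)

lemma vec_linear_bounded_linear:
  fixes f :: "complex^'m::finite \<Rightarrow> complex^'k::finite"
  assumes "vec_linear f" shows "bounded_linear f"
proof -
  have "f = (*v) (matrix f)" using matrix_works[OF assms] by auto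
  then show ?thesis by (metis matrix_vector_mul_bounded_linear)
qed

lemma norm_le_card_mult_bound:
  fixes A :: "complex^'m::finite^'k::finite"
  assumes "\<And>i j. norm (A $ i $ j) \<le> b"
  shows "norm A \<le> of_nat CARD('k) * of_nat CARD('m) * b"
proof -
  have row: "norm (A $ i) \<le> of_nat CARD('m) * b" for i
  proof -
    have "norm (A $ i) \<le> (\<Sum>j\<in>UNIV. norm (A $ i $ j))"
      unfolding norm_vec_def by (rule L2_set_le_sum) simp
    also have "\<dots> \<le> (\<Sum>j\<in>(UNIV::'m set). b)" by (rule sum_mono) (rule assms)
    finally show ?thesis by simp
  qed
  have "norm A \<le> (\<Sum>i\<in>UNIV. norm (A $ i))" unfolding norm_vec_def by (rule L2_set_le_sum) simp
  also have "\<dots> \<le> (\<Sum>i\<in>(UNIV::'k set). of_nat CARD('m) * b)" by (rule sum_mono) (rule row)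
  finally show ?thesis by simp
qed

lemma matrix_vector_mult_axis_nth: "((T::'a::comm_ring_1^'n::finite^'m) *v axis j 1) $ i = T $ i $ j"
  by (simp add: matrix_vector_mult_def axis_def if_distrib cong: if_cong)

lemma contraction_imp_norm_matrix_le:
  fixes T :: "complex^'n::finite^'n"
  assumes "\<And>a. norm (T *v a) \<le> norm a"
  shows "norm T \<le> of_nat CARD('n) * of_nat CARD('n)"
proof -
  have "norm (T $ i $ j) \<le> 1" for i j
  proof -
    have "T $ i $ j = (T *v axis j 1) $ i" by (simp add: matrix_vector_mult_axis_nth)
    then have "norm (T $ i $ j) \<le> norm (T *v axis j 1)" by (metis Finite_Cartesian_Product.norm_nth_le)
    also have "\<dots> \<le> 1" using assms[of "axis j 1"] by (simp add: norm_eq_1 inner_axis')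
    finally show ?thesis .
  qed
  then show ?thesis using norm_le_card_mult_bound[of T 1] by simp
qed

lemma bdot_add_left: "bdot (z + z') w = bdot z w + bdot z' w"
  by (simp add: bdot_def distrib_right sum.distrib)

lemma bdot_add_right: "bdot z (w + w') = bdot z w + bdot z w'"
  by (simp add: bdot_def distrib_left sum.distrib)

lemma bdot_commute: "bdot z w = bdot w z"
  by (simp add: bdot_def mult.commute)

lemma bdot_matrix_vector_mult: "bdot ((A::complex^'m::finite^'k::finite) *v u) v = bdot u (transpose A *v v)"
  unfolding bdot_def matrix_vector_mult_def transpose_def
  by (simp add: sum_distrib_left sum_distrib_right mult_ac) (rule sum.swap)

lemma bdot_symmetric_matrix:
  assumes "transpose M = M"
  shows "bdot b ((M::complex^'m::finite^'m) *v a) = bdot a (M *v b)"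
proof -
  have "bdot a (M *v b) = bdot (M *v b) a" by (rule bdot_commute)
  also have "\<dots> = bdot b (M *v a)" by (subst bdot_matrix_vector_mult) (simp add: assms)
  finally show ?thesis ..
qed

section \<open>Position and momentum coordinates\<close>

definition x_part :: "'a^('n::finite + 'n) \<Rightarrow> 'a^'n" where
  "x_part z = (\<chi> i. z $ Inl i)"

definition xi_part :: "'a^('n::finite + 'n) \<Rightarrow> 'a^'n" where
  "xi_part z = (\<chi> i. z $ Inr i)"

definition join :: "'a^'n::finite \<Rightarrow> 'a^'n \<Rightarrow> 'a^('n + 'n)" where
  "join x \<xi> = (\<chi> a. case a of Inl i \<Rightarrow> x $ i | Inr i \<Rightarrow> \<xi> $ i)"

lemma x_part_nth [simp]: "x_part z $ i = z $ Inl i"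
  and xi_part_nth [simp]: "xi_part z $ i = z $ Inr i"
  and join_nth_Inl [simp]: "join x \<xi> $ Inl i = x $ i"
  and join_nth_Inr [simp]: "join x \<xi> $ Inr i = \<xi> $ i"
  by (simp_all add: x_part_def xi_part_def join_def)

lemma x_part_join [simp]: "x_part (join x \<xi>) = x"
  and xi_part_join [simp]: "xi_part (join x \<xi>) = \<xi>"
  and join_x_part_xi_part [simp]: "join (x_part z) (xi_part z) = z"
  by (simp_all add: vec_eq_iff join_def split: sum.split)

lemma join_eq_iff: "join x \<xi> = join x' \<xi>' \<longleftrightarrow> x = x' \<and> \<xi> = \<xi>'"
  by (metis x_part_join xi_part_join)

lemma join_add: "join x \<xi> + join x' \<xi>' = join (x + x') (\<xi> + \<xi>')"
  and join_scale: "c *s join x \<xi> = join (c *s x) (c *s \<xi>)"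
  and join_zero [simp]: "join 0 0 = 0"
  by (simp_all add: vec_eq_iff join_def split: sum.split)

lemma join_eq_0_iff: "join x \<xi> = 0 \<longleftrightarrow> x = 0 \<and> \<xi> = 0"
  by (metis join_eq_iff join_zero)

lemma vec_linear_x_part: "vec_linear (x_part :: 'a::field^('n::finite + 'n) \<Rightarrow> _)"
  and vec_linear_xi_part: "vec_linear (xi_part :: 'a::field^('n::finite + 'n) \<Rightarrow> _)"
  by unfold_locales (simp_all add: vec_eq_iff)

lemma vec_linear_join: "vec_linear f \<Longrightarrow> vec_linear g \<Longrightarrow> vec_linear (\<lambda>y. join (f y) (g y))"
  by unfold_locales (simp_all add: join_add join_scale vec.linear_add vec.linear_scale)

lemma sum_UNIV_Plus:
  "(\<Sum>a\<in>(UNIV::('a::finite + 'b::finite) set). f a) = (\<Sum>i\<in>UNIV. f (Inl i)) + (\<Sum>i\<in>UNIV. f (Inr i))"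
  using sum.Plus[of "UNIV::'a set" "UNIV::'b set" f] by (simp add: o_def)

lemma sum_axis_right: "(\<Sum>k\<in>UNIV. f k * (axis j (1::'a::comm_ring_1) $ k)) = f j"
proof -
  have "(\<Sum>k\<in>UNIV. f k * axis j 1 $ k) = (\<Sum>k\<in>UNIV. if k = j then f k else 0)"
    by (rule sum.cong) (auto simp: axis_def)
  then show ?thesis by simp
qed

lemma symp_form_join_axis: "symp_form (join (axis i 1) u) (join (axis j 1) v) = u $ j - v $ i"
  by (simp add: symp_form_def sum_subtractf sum_axis_right)

lemma symp_form_nondegenerate:
  assumes "\<And>w. symp_form z w = 0" shows "z = 0"
proof -
  have "z $ Inl i = 0" for i
    using assms[of "join 0 (axis i 1)"]
    by (simp add: symp_form_def sum_negf sum_axis_right mult.commute[of "axis i 1 $ _"])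
  moreover have "z $ Inr i = 0" for i
    using assms[of "join (axis i 1) 0"] by (simp add: symp_form_def sum_axis_right)
  ultimately show ?thesis by (simp add: vec_eq_iff) (metis sum.exhaust)
qed

lemma symp_form_tendsto:
  "X \<longlonglongrightarrow> x \<Longrightarrow> Y \<longlonglongrightarrow> y \<Longrightarrow> (\<lambda>n. symp_form (X n) (Y n)) \<longlonglongrightarrow> symp_form x y"
  unfolding symp_form_def by (intro tendsto_intros)

lemma symp_form_zero [simp]: "symp_form 0 w = 0" "symp_form w 0 = 0"
  by (simp_all add: symp_form_def)

section \<open>The Hermitian form \<open>i \<sigma>(z\<^sup>*, z)\<close>\<close>

definition hform :: "complex^('n::finite + 'n) \<Rightarrow> real" where
  "hform z = (\<Sum>i\<in>UNIV. 2 * Im (z $ Inr i * cnj (z $ Inl i)))"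

lemma hform_eq_symp_form: "complex_of_real (hform z) = \<i> * symp_form (cconj z) z"
  unfolding symp_form_def hform_def cconj_def
  by (simp add: sum_distrib_left complex_eq_iff Re_sum Im_sum algebra_simps)

lemma hform_zero [simp]: "hform 0 = 0"
  by (simp add: hform_def)

lemma hform_x_part_zero: "x_part z = 0 \<Longrightarrow> hform z = 0"
  by (simp add: hform_def vec_eq_iff)

lemma hform_scaleR: "hform (r *\<^sub>R z) = r\<^sup>2 * hform z"
  by (simp add: hform_def sum_distrib_left power2_eq_square algebra_simps)

lemma hform_cconj: "hform (cconj z) = - hform z"
  by (simp add: hform_def cconj_def sum_negf[symmetric])

lemma continuous_on_hform: "continuous_on S hform"
  unfolding hform_def by (intro continuous_intros)

lemma hform_tendsto: "X \<longlonglongrightarrow> x \<Longrightarrow> (\<lambda>n. hform (X n)) \<longlonglongrightarrow> hform x"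
  unfolding hform_def by (intro tendsto_intros)

lemma hform_join_cvec:
  "hform (join (cvec y) (G *v cvec y)) = 2 * (y \<bullet> (im_mat G *v y))"
  unfolding hform_def inner_vec_def matrix_vector_mult_def im_mat_def cvec_def
  by (simp add: Im_sum sum_distrib_left sum_distrib_right mult_ac)

lemma symp_form_cconj: "symp_form (cconj z) (cconj w) = cnj (symp_form z w)"
  by (simp add: symp_form_def cconj_def)

lemma cconj_cconj [simp]: "cconj (cconj z) = z"
  by (simp add: cconj_def vec_eq_iff)

lemma cconj_eq_0_iff [simp]: "cconj z = 0 \<longleftrightarrow> z = 0"
  by (simp add: cconj_def vec_eq_iff)

lemma cconj_add: "cconj (z + w) = cconj z + cconj w"
  and cconj_scale: "cconj (c *s z) = cnj c *s cconj z"
  by (simp_all add: cconj_def vec_eq_iff)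

lemma vec_linear_cconj_conjugate: "vec_linear f \<Longrightarrow> vec_linear (\<lambda>z. cconj (f (cconj z)))"
  by unfold_locales (simp_all add: cconj_add cconj_scale vec.linear_add vec.linear_scale)

definition cmat :: "complex^'m^'k \<Rightarrow> complex^'m^'k" where
  "cmat G = (\<chi> i j. cnj (G $ i $ j))"

lemma cconj_join_matrix: "cconj (join y (G *v y)) = join (cconj y) (cmat G *v cconj y)"
  by (simp add: cconj_def cmat_def matrix_vector_mult_def vec_eq_iff join_def split: sum.split)

lemma transpose_cmat: "transpose (cmat G) = cmat (transpose G)"
  by (simp add: vec_eq_iff cmat_def transpose_def)

definition ccoord_plus :: "complex^('n::finite + 'n) \<Rightarrow> complex^'n" where
  "ccoord_plus z = x_part z + \<i> *s xi_part z"

definition ccoord_minus :: "complex^('n::finite + 'n) \<Rightarrow> complex^'n" where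
  "ccoord_minus z = x_part z - \<i> *s xi_part z"

definition from_ccoords :: "complex^'n::finite \<Rightarrow> complex^'n \<Rightarrow> complex^('n + 'n)" where
  "from_ccoords a b = join ((1/2) *s (a + b)) ((- \<i>/2) *s (a - b))"

lemma ccoord_plus_from_ccoords [simp]: "ccoord_plus (from_ccoords a b) = a"
  and ccoord_minus_from_ccoords [simp]: "ccoord_minus (from_ccoords a b) = b"
  and from_ccoords_ccoords [simp]: "from_ccoords (ccoord_plus z) (ccoord_minus z) = z"
  and from_ccoords_zero [simp]: "from_ccoords 0 0 = 0"
  by (simp_all add: ccoord_plus_def ccoord_minus_def from_ccoords_def vec_eq_iff join_def
      field_simps split: sum.split)

lemma vec_linear_ccoord_plus: "vec_linear ccoord_plus"
  and vec_linear_ccoord_minus: "vec_linear ccoord_minus"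
  by unfold_locales (simp_all add: ccoord_plus_def ccoord_minus_def vec_eq_iff algebra_simps)

lemma vec_linear_from_ccoords_graph: "vec_linear f \<Longrightarrow> vec_linear (\<lambda>a. from_ccoords a (f a))"
  by unfold_locales
    (simp_all add: from_ccoords_def join_add join_scale vec_eq_iff algebra_simps vec.linear_add
      vec.linear_scale)

lemma from_ccoords_tendsto: "Y \<longlonglongrightarrow> b \<Longrightarrow> (\<lambda>n. from_ccoords a (Y n)) \<longlonglongrightarrow> from_ccoords a b"
  unfolding from_ccoords_def join_def vector_scalar_mult_def
  by (intro tendsto_intros) (auto split: sum.split intro!: tendsto_intros)

lemma hform_ccoords: "hform z = ((norm (ccoord_minus z))\<^sup>2 - (norm (ccoord_plus z))\<^sup>2) / 2"
proof -
  have diff: "(cmod (x - \<i> * k))\<^sup>2 - (cmod (x + \<i> * k))\<^sup>2 = 4 * Im (k * cnj x)" for x k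
    unfolding cmod_power2 by (simp add: power2_eq_square algebra_simps)
  show ?thesis
    unfolding norm_vec_def L2_set_def hform_def ccoord_plus_def ccoord_minus_def
    by (simp add: sum_nonneg sum_subtractf[symmetric] sum_divide_distrib diff) (rule sum.cong; simp)
qed

section \<open>Linear canonical maps that increase \<open>hform\<close>\<close>

locale expanding =
  fixes K :: "complex^('n::finite + 'n) \<Rightarrow> complex^('n + 'n)"
  assumes linear: "vec_linear K"
    and symplectic: "\<And>z w. symp_form (K z) (K w) = symp_form z w"
    and hform_less: "\<And>z. z \<noteq> 0 \<Longrightarrow> hform z < hform (K z)"
begin

lemma K_0 [simp]: "K 0 = 0"
  using linear vec.linear_0 by blast

lemma hform_le: "hform z \<le> hform (K z)"
  using hform_less[of z] by (cases "z = 0") auto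

lemma incseq_hform_orbit: "incseq (\<lambda>j. hform ((K^^j) z))"
  by (rule incseq_SucI) (simp add: hform_le)

lemma hform_orbit_mono: "j \<le> k \<Longrightarrow> hform ((K^^j) z) \<le> hform ((K^^k) z)"
  using incseq_hform_orbit[of z] unfolding mono_def by blast

lemma vec_linear_iterate: "vec_linear (K^^j)"
  by (rule vec_linear_funpow[OF linear])

lemma symp_form_iterate: "symp_form ((K^^j) z) ((K^^j) w) = symp_form z w"
  by (induction j) (simp_all add: symplectic)

lemma inj: "inj K"
  unfolding vec.linear_inj_iff_eq_0[OF linear]
proof (intro allI impI)
  fix z assume "K z = 0"
  then have "symp_form z w = 0" for w using symplectic[of z w] by simp
  then show "z = 0" by (rule symp_form_nondegenerate)
qed

text \<open>By compactness of the unit sphere and homogeneity, the increase of \<open>hform\<close> is uniform.\<close>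

lemma hform_increment_lower_bound: "\<exists>c>0. \<forall>z. c * (norm z)\<^sup>2 \<le> hform (K z) - hform z"
proof -
  let ?S = "sphere (0::complex^('n + 'n)) 1"
  have "?S \<noteq> {}" using vector_choose_size[of 1] by auto
  moreover have "continuous_on ?S (\<lambda>z. hform (K z) - hform z)"
    by (intro continuous_intros continuous_on_compose2[OF continuous_on_hform
          linear_continuous_on[OF vec_linear_bounded_linear[OF linear]]] continuous_on_hform) auto
  ultimately obtain z0 where z0: "z0 \<in> ?S" "\<And>y. y \<in> ?S \<Longrightarrow> hform (K z0) - hform z0 \<le> hform (K y) - hform y"
    using continuous_attains_inf[OF compact_sphere] by blast
  have "(hform (K z0) - hform z0) * (norm z)\<^sup>2 \<le> hform (K z) - hform z" for z
  proof (cases "z = 0")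
    case False
    define v where "v = (1 / norm z) *\<^sub>R z"
    have zv: "z = norm z *\<^sub>R v" using False by (simp add: v_def)
    have "hform (K z) - hform z = (norm z)\<^sup>2 * (hform (K v) - hform v)"
      by (subst (1 2) zv) (simp add: vec_linear_scaleR[OF linear] hform_scaleR algebra_simps)
    moreover have "v \<in> ?S" using False by (simp add: v_def)
    ultimately show ?thesis using z0(2) by (metis mult.commute mult_right_mono zero_le_power2)
  qed simp
  moreover have "z0 \<noteq> 0" using z0(1) by auto
  then have "hform (K z0) - hform z0 > 0" using hform_less[of z0] by simp
  ultimately show ?thesis by blast
qed

definition stable :: "complex^('n + 'n) \<Rightarrow> bool" where
  "stable z \<longleftrightarrow> (\<lambda>j. (K^^j) z) \<longlonglongrightarrow> 0"

lemma hform_orbit_nonpos_imp_stable: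
  assumes "\<And>j. hform ((K^^j) z) \<le> 0"
  shows "stable z"
proof -
  obtain c where c: "c > 0" "\<And>z. c * (norm z)\<^sup>2 \<le> hform (K z) - hform z"
    using hform_increment_lower_bound by blast
  define h where "h j = hform ((K^^j) z)" for j
  obtain L where L: "h \<longlonglongrightarrow> L"
    using incseq_convergent[OF incseq_hform_orbit, of z 0] assms unfolding h_def by blast
  have "(\<lambda>j. h (Suc j) - h j) \<longlonglongrightarrow> 0"
    using tendsto_diff[OF LIMSEQ_Suc[OF L] L] by simp
  then have lim: "(\<lambda>j. (h (Suc j) - h j) / c) \<longlonglongrightarrow> 0"
    by (rule tendsto_divide_zero)
  have "(norm ((K^^j) z))\<^sup>2 \<le> (h (Suc j) - h j) / c" for j
    using c(2)[of "(K^^j) z"] c(1) by (simp add: h_def field_simps)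
  then have "(\<lambda>j. (norm ((K^^j) z))\<^sup>2) \<longlonglongrightarrow> 0"
    by (intro tendsto_sandwich[OF _ _ tendsto_const lim]) simp_all
  then have "(\<lambda>j. sqrt ((norm ((K^^j) z))\<^sup>2)) \<longlonglongrightarrow> sqrt 0"
    by (rule tendsto_real_sqrt)
  then have "(\<lambda>j. norm ((K^^j) z)) \<longlonglongrightarrow> 0"
    by simp
  then show ?thesis unfolding stable_def using tendsto_norm_zero_iff by blast
qed

lemma symp_form_stable: "stable z \<Longrightarrow> stable w \<Longrightarrow> symp_form z w = 0"
  unfolding stable_def
  using symp_form_tendsto[of "\<lambda>j. (K^^j) z" 0 "\<lambda>j. (K^^j) w" 0]
  by (simp add: symp_form_iterate LIMSEQ_const_iff)

lemma hform_stable_neg: assumes "stable z" "z \<noteq> 0" shows "hform z < 0"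
proof -
  have "(\<lambda>j. hform ((K^^j) z)) \<longlonglongrightarrow> 0"
    using hform_tendsto[OF assms(1)[unfolded stable_def]] by simp
  then have "hform (K z) \<le> 0"
    using incseq_le[OF incseq_hform_orbit, of z 0 1] by simp
  then show ?thesis using hform_less[OF assms(2)] by simp
qed

lemma stable_commuting_image:
  assumes "vec_linear L" "\<And>z. L (K z) = K (L z)" "stable z"
  shows "stable (L z)"
proof -
  have "L ((K^^j) z) = (K^^j) (L z)" for j by (induction j) (simp_all add: assms(2))
  moreover have "(\<lambda>j. L ((K^^j) z)) \<longlonglongrightarrow> L 0"
    using bounded_linear.tendsto[OF vec_linear_bounded_linear[OF assms(1)]] assms(3)
    unfolding stable_def by blast
  ultimately show ?thesis unfolding stable_def by (simp add: vec.linear_0[OF assms(1)])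
qed

text \<open>The subspace of vectors whose first \<open>k\<close> iterates have \<open>hform \<le> 0\<close> is, in the coordinates
  \<open>(a, b)\<close>, the graph of a contraction \<open>a \<mapsto> b\<close>: the map \<open>z \<mapsto> (a(z), b(K\<^sup>k z))\<close> is injective.\<close>

lemma exists_contraction_graph_nonpos:
  "\<exists>T::complex^'n^'n. (\<forall>a. norm (T *v a) \<le> norm a) \<and>
     (\<forall>a. hform ((K^^k) (from_ccoords a (T *v a))) \<le> 0)"
proof -
  define \<Psi> where "\<Psi> z = join (ccoord_plus z) (ccoord_minus ((K^^k) z))" for z
  have lin: "vec_linear \<Psi>" unfolding \<Psi>_def
    by (intro vec_linear_join vec_linear_ccoord_plus
        vec_linear_compose[OF vec_linear_ccoord_minus vec_linear_iterate])
  have "z = 0" if "\<Psi> z = 0" for z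
  proof -
    have a: "ccoord_plus z = 0" and b: "ccoord_minus ((K^^k) z) = 0"
      using that unfolding \<Psi>_def join_eq_0_iff by auto
    have "hform z \<le> hform ((K^^k) z)" using hform_orbit_mono[of 0 k z] by simp
    also have "\<dots> \<le> 0" using b by (simp add: hform_ccoords)
    finally have "ccoord_minus z = 0" using a by (simp add: hform_ccoords)
    with a show "z = 0" by (metis from_ccoords_ccoords from_ccoords_zero)
  qed
  then obtain g where g: "\<And>y. \<Psi> (g y) = y" and lg: "vec_linear g"
    using vec_linear_bij[OF lin] vec.linear_inj_iff_eq_0[OF lin] by metis
  define f where "f a = ccoord_minus (g (join a 0))" for a
  have "vec_linear f" unfolding f_def
    by (intro vec_linear_compose[OF vec_linear_ccoord_minus] vec_linear_compose[OF lg]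
        vec_linear_join vec.linear_id[unfolded id_def]) (unfold_locales, simp_all)
  then have Tf: "matrix f *v a = f a" for a by (simp add: matrix_works)
  show ?thesis
  proof (intro exI[of _ "matrix f"] conjI allI)
    fix a
    define w where "w = g (join a 0)"
    have "\<Psi> w = join a 0" unfolding w_def by (rule g)
    then have "ccoord_plus w = a" and bw: "ccoord_minus ((K^^k) w) = 0"
      unfolding \<Psi>_def join_eq_iff by auto
    then have w: "from_ccoords a (matrix f *v a) = w"
      by (metis Tf f_def from_ccoords_ccoords w_def)
    show nonpos: "hform ((K^^k) (from_ccoords a (matrix f *v a))) \<le> 0"
      using bw by (simp add: w hform_ccoords)
    have "hform w \<le> 0" using hform_orbit_mono[of 0 k w] nonpos w by simp
    then have "(norm (matrix f *v a))\<^sup>2 \<le> (norm a)\<^sup>2"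
      using w[symmetric] by (simp add: hform_ccoords)
    then show "norm (matrix f *v a) \<le> norm a" by (rule power2_le_imp_le) simp
  qed
qed

text \<open>A limit of these contractions along a subsequence has a graph of stable vectors.\<close>

lemma exists_stable_contraction_graph: "\<exists>T::complex^'n^'n. \<forall>a. stable (from_ccoords a (T *v a))"
proof -
  obtain T :: "nat \<Rightarrow> complex^'n^'n" where
    T: "\<And>k a. norm (T k *v a) \<le> norm a" "\<And>k a. hform ((K^^k) (from_ccoords a (T k *v a))) \<le> 0"
    using exists_contraction_graph_nonpos by metis
  have "bounded (range T)"
    unfolding bounded_iff using contraction_imp_norm_matrix_le T(1) by blast
  then obtain T\<^sub>0 r where r: "strict_mono r" "(T \<circ> r) \<longlonglongrightarrow> T\<^sub>0"
    using bounded_imp_convergent_subsequence by blast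
  have "hform ((K^^j) (from_ccoords a (T\<^sub>0 *v a))) \<le> 0" for a j
  proof (rule LIMSEQ_le_const2)
    have "(\<lambda>m. T (r m) *v a) \<longlonglongrightarrow> T\<^sub>0 *v a"
      using r(2) unfolding matrix_vector_mult_def o_def by (intro tendsto_intros)
    then have "(\<lambda>m. from_ccoords a (T (r m) *v a)) \<longlonglongrightarrow> from_ccoords a (T\<^sub>0 *v a)"
      by (rule from_ccoords_tendsto)
    then show "(\<lambda>m. hform ((K^^j) (from_ccoords a (T (r m) *v a))))
        \<longlonglongrightarrow> hform ((K^^j) (from_ccoords a (T\<^sub>0 *v a)))"
      by (intro hform_tendsto bounded_linear.tendsto[OF vec_linear_bounded_linear[OF vec_linear_iterate]])
    show "\<exists>N. \<forall>m\<ge>N. hform ((K^^j) (from_ccoords a (T (r m) *v a))) \<le> 0"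
    proof (intro exI allI impI)
      fix m assume "j \<le> m"
      then have "j \<le> r m" using seq_suble[OF r(1), of m] by simp
      then show "hform ((K^^j) (from_ccoords a (T (r m) *v a))) \<le> 0"
        using hform_orbit_mono T(2) order_trans by blast
    qed
  qed
  then show ?thesis using hform_orbit_nonpos_imp_stable by blast
qed

text \<open>The stable vectors are isotropic, so their graph over the \<open>x\<close>-coordinates is the graph of
  a symmetric matrix.\<close>

lemma exists_stable_graph:
  "\<exists>G::complex^'n^'n. transpose G = G \<and> (\<forall>y. stable (join y (G *v y)))"
proof -
  obtain T :: "complex^'n^'n" where st: "\<And>a. stable (from_ccoords a (T *v a))"
    using exists_stable_contraction_graph by blast
  define X where "X a = x_part (from_ccoords a (T *v a))" for a
  have lX: "vec_linear X"
    unfolding X_def by (intro vec_linear_compose[OF vec_linear_x_part] vec_linear_from_ccoords_graph) simp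
  have "a = 0" if "X a = 0" for a
  proof -
    have "from_ccoords a (T *v a) = 0"
      using hform_x_part_zero[OF that[unfolded X_def]] hform_stable_neg[OF st] by fastforce
    then show "a = 0" by (metis ccoord_plus_from_ccoords vec.linear_0[OF vec_linear_ccoord_plus])
  qed
  then obtain g where g: "\<And>y. X (g y) = y" and lg: "vec_linear g"
    using vec_linear_bij[OF lX] vec.linear_inj_iff_eq_0[OF lX] by metis
  define Z where "Z y = from_ccoords (g y) (T *v g y)" for y
  define G where "G = matrix (\<lambda>y. xi_part (Z y))"
  have "vec_linear (\<lambda>y. xi_part (Z y))" unfolding Z_def
    by (intro vec_linear_compose[OF vec_linear_xi_part]
        vec_linear_compose[OF vec_linear_from_ccoords_graph lg]) simp
  moreover have "x_part (Z y) = y" for y using g[of y] by (simp add: X_def Z_def)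
  ultimately have GZ: "join y (G *v y) = Z y" for y
    unfolding G_def by (metis matrix_works join_x_part_xi_part)
  then have stG: "stable (join y (G *v y))" for y by (simp add: Z_def st)
  have "G $ j $ i = G $ i $ j" for i j
    using symp_form_stable[OF stG stG, of "axis i 1" "axis j 1"]
    by (simp add: symp_form_join_axis matrix_vector_mult_axis_nth)
  then have "transpose G = G" by (simp add: transpose_def vec_eq_iff)
  with stG show ?thesis by blast
qed

lemma exists_negative_isotropic_graph:
  assumes "vec_linear L" "\<And>z. L (K z) = K (L z)"
  shows "\<exists>G::complex^'n^'n. transpose G = G \<and> (\<forall>y. y \<noteq> 0 \<longrightarrow> hform (join y (G *v y)) < 0)
     \<and> (\<forall>y w. symp_form (join y (G *v y)) (L (join w (G *v w))) = 0)"
proof -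
  obtain G :: "complex^'n^'n" where G: "transpose G = G" "\<And>y. stable (join y (G *v y))"
    using exists_stable_graph by blast
  have "hform (join y (G *v y)) < 0" if "y \<noteq> 0" for y
    using hform_stable_neg[OF G(2)] that join_eq_0_iff by blast
  moreover have "symp_form (join y (G *v y)) (L (join w (G *v w))) = 0" for y w
    by (intro symp_form_stable G(2) stable_commuting_image[OF assms])
  ultimately show ?thesis using G(1) by blast
qed

text \<open>Conjugation reverses the sign of \<open>hform\<close>, which turns \<open>K\<^sup>-\<^sup>1\<close> into an expanding map.\<close>

lemma expanding_conjugate_inverse:
  assumes "vec_linear K'" "\<And>z. K (K' z) = z"
  shows "expanding (\<lambda>z. cconj (K' (cconj z)))"
proof (rule expanding.intro)
  show "vec_linear (\<lambda>z. cconj (K' (cconj z)))" by (rule vec_linear_cconj_conjugate[OF assms(1)])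
  have "symp_form (K' u) (K' v) = symp_form u v" for u v
    using symplectic[of "K' u" "K' v"] by (simp add: assms(2))
  then show "symp_form (cconj (K' (cconj z))) (cconj (K' (cconj w))) = symp_form z w"
    for z w :: "complex^('n + 'n)"
    by (simp add: symp_form_cconj)
  fix z :: "complex^('n + 'n)" assume "z \<noteq> 0"
  then have "K' (cconj z) \<noteq> 0" by (metis assms(2) K_0 cconj_eq_0_iff)
  then show "hform z < hform (cconj (K' (cconj z)))"
    using hform_less[of "K' (cconj z)"] by (simp add: assms(2) hform_cconj)
qed

lemma exists_positive_isotropic_graph:
  assumes L: "vec_linear L" "\<And>z. L (K z) = K (L z)"
  shows "\<exists>G::complex^'n^'n. transpose G = G \<and> (\<forall>y. y \<noteq> 0 \<longrightarrow> hform (join y (G *v y)) > 0)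
     \<and> (\<forall>y w. symp_form (join y (G *v y)) (L (join w (G *v w))) = 0)"
proof -
  obtain K' where K': "vec_linear K'" "\<And>z. K' (K z) = z" "\<And>z. K (K' z) = z"
    using vec_linear_bij[OF linear inj] by blast
  interpret conj: expanding "\<lambda>z. cconj (K' (cconj z))"
    by (rule expanding_conjugate_inverse[OF K'(1,3)])
  have "L (K' z) = K' (L z)" for z by (metis K'(2,3) L(2))
  then obtain G :: "complex^'n^'n" where G: "transpose G = G"
      "\<forall>y. y \<noteq> 0 \<longrightarrow> hform (join y (G *v y)) < 0"
      "\<forall>y w. symp_form (join y (G *v y)) (cconj (L (cconj (join w (G *v w))))) = 0"
    using conj.exists_negative_isotropic_graph[OF vec_linear_cconj_conjugate[OF L(1)]] by auto
  show ?thesis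
  proof (intro exI[of _ "cmat G"] conjI allI impI)
    show "transpose (cmat G) = cmat G" by (simp add: transpose_cmat G(1))
    show "hform (join y (cmat G *v y)) > 0" if "y \<noteq> 0" for y
    proof -
      have "hform (join y (cmat G *v y)) = - hform (join (cconj y) (G *v cconj y))"
        by (metis cconj_join_matrix cconj_cconj hform_cconj)
      then show ?thesis using G(2) that by simp
    qed
    show "symp_form (join y (cmat G *v y)) (L (join w (cmat G *v w))) = 0" for y w
    proof -
      have "join (cconj y) (G *v cconj y) = cconj (join y (cmat G *v y))"
        by (metis cconj_join_matrix cconj_cconj)
      moreover have "cconj (join (cconj w) (G *v cconj w)) = join w (cmat G *v w)"
        using cconj_join_matrix[of "cconj w" G] by simp
      ultimately have "symp_form (cconj (join y (cmat G *v y))) (cconj (L (join w (cmat G *v w)))) = 0"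
        using G(3) by metis
      then show ?thesis by (simp add: symp_form_cconj)
    qed
  qed
qed

end

lemma strictly_positive_imp_expanding:
  assumes "strictly_positive (K :: complex^('n::finite + 'n)^('n + 'n))"
  shows "expanding (\<lambda>z. K *v z)"
proof (rule expanding.intro)
  show "vec_linear ((*v) K)" by simp
  show "symp_form (K *v z) (K *v w) = symp_form z w" for z w
    using assms unfolding strictly_positive_def canonical_def by blast
  fix z :: "complex^('n + 'n)" assume "z \<noteq> 0"
  then have "complex_of_real (hform (K *v z)) - complex_of_real (hform z) > 0"
    using assms unfolding strictly_positive_def by (simp add: right_diff_distrib hform_eq_symp_form)
  then show "hform z < hform (K *v z)" by (simp add: less_complex_def)
qed

section \<open>The matrix exponential commutes with its exponent\<close>

lemma mpow_Suc: "mpow M (Suc k) = mpow M k ** M"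
  by (simp add: mpow_def)

lemma mpow_commute: "mpow M k ** M = M ** mpow M k"
proof (induction k)
  case 0
  then show ?case by (simp add: mpow_def)
next
  case (Suc k)
  have "mpow M (Suc k) ** M = (M ** mpow M k) ** M" by (simp add: mpow_Suc Suc)
  also have "\<dots> = M ** mpow M (Suc k)" by (simp add: mpow_Suc matrix_mul_assoc)
  finally show ?case .
qed

lemma norm_mpow_nth_le:
  fixes M :: "complex^'m::finite^'m"
  defines "m \<equiv> (\<Sum>i\<in>UNIV. \<Sum>j\<in>UNIV. norm (M $ i $ j))"
  shows "norm (mpow M k $ i $ j) \<le> (of_nat CARD('m) * m) ^ k"
proof (induction k arbitrary: i j)
  case 0
  then show ?case by (simp add: mpow_def mat_def)
next
  case (Suc k)
  have entry: "norm (M $ l $ j) \<le> m" for l j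
  proof -
    have "norm (M $ l $ j) \<le> (\<Sum>j\<in>UNIV. norm (M $ l $ j))" by (rule member_le_sum) auto
    also have "\<dots> \<le> m" unfolding m_def by (rule member_le_sum) (auto intro: sum_nonneg)
    finally show ?thesis .
  qed
  have "m \<ge> 0" unfolding m_def by (intro sum_nonneg) simp
  have "norm (mpow M (Suc k) $ i $ j) = norm (\<Sum>l\<in>UNIV. mpow M k $ i $ l * M $ l $ j)"
    by (simp add: mpow_Suc matrix_matrix_mult_def)
  also have "\<dots> \<le> (\<Sum>l\<in>UNIV. norm (mpow M k $ i $ l) * norm (M $ l $ j))"
    by (rule order_trans[OF norm_sum]) (simp add: norm_mult)
  also have "\<dots> \<le> (\<Sum>l\<in>(UNIV::'m set). (of_nat CARD('m) * m) ^ k * m)"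
    by (rule sum_mono, rule mult_mono) (auto simp: Suc entry \<open>m \<ge> 0\<close>)
  also have "\<dots> = (of_nat CARD('m) * m) ^ Suc k" by (simp add: algebra_simps)
  finally show ?case .
qed

lemma summable_mexp_series:
  fixes M :: "complex^'m::finite^'m"
  shows "summable (\<lambda>k. (1 / fact k) *\<^sub>R mpow M k)"
proof (rule summable_comparison_test'[where N=0])
  define x where "x = of_nat CARD('m) * (\<Sum>i\<in>UNIV. \<Sum>j\<in>UNIV. norm (M $ i $ j))"
  define C :: real where "C = of_nat CARD('m) * of_nat CARD('m)"
  show "summable (\<lambda>k. C * (inverse (fact k) * x ^ k))"
    by (rule summable_mult) (rule summable_exp)
  fix k :: nat
  have "norm (mpow M k) \<le> C * x ^ k"
    unfolding C_def x_def by (rule norm_le_card_mult_bound[OF norm_mpow_nth_le])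
  then have "(1 / fact k) * norm (mpow M k) \<le> (1 / fact k) * (C * x ^ k)"
    by (rule mult_left_mono) simp
  then show "norm ((1 / fact k) *\<^sub>R mpow M k) \<le> C * (inverse (fact k) * x ^ k)"
    by (simp add: field_simps)
qed

lemma mexp_commute: "mexp M ** M = M ** mexp (M::complex^'m::finite^'m)"
proof -
  have lin: "bounded_linear (\<lambda>A::complex^'m^'m. A ** M)" "bounded_linear (\<lambda>A::complex^'m^'m. M ** A)"
    unfolding linear_conv_bounded_linear[symmetric]
    by (rule linearI; simp add: vec_eq_iff matrix_matrix_mult_def scaleR_sum_right algebra_simps
        sum.distrib)+
  have scale: "(c *\<^sub>R A) ** M = c *\<^sub>R (A ** M)" "M ** (c *\<^sub>R A) = c *\<^sub>R (M ** A)"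
    for c and A :: "complex^'m^'m"
    by (simp_all add: vec_eq_iff matrix_matrix_mult_def scaleR_sum_right)
  have "mexp M ** M = (\<Sum>k. ((1 / fact k) *\<^sub>R mpow M k) ** M)"
    unfolding mexp_def by (rule bounded_linear.suminf[OF lin(1) summable_mexp_series])
  also have "\<dots> = (\<Sum>k. M ** ((1 / fact k) *\<^sub>R mpow M k))"
    by (simp add: scale mpow_commute)
  also have "\<dots> = M ** mexp M"
    unfolding mexp_def by (rule bounded_linear.suminf[OF lin(2) summable_mexp_series, symmetric])
  finally show ?thesis .
qed

section \<open>Quadratic forms and their Hamilton maps\<close>

definition std_basis :: "'n::finite + 'n \<Rightarrow> (real^'n) \<times> (real^'n)" where
  "std_basis a = (case a of Inl i \<Rightarrow> ex i | Inr i \<Rightarrow> exi i)"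

definition hessian :: "((real^'n::finite) \<times> (real^'n) \<Rightarrow> complex) \<Rightarrow> complex^('n + 'n)^('n + 'n)" where
  "hessian q = (\<chi> a b. d2 q (std_basis a) (std_basis b))"

lemma hessian_symmetric: "transpose (hessian q) = hessian q"
  by (simp add: vec_eq_iff transpose_def hessian_def d2_def add.commute)

text \<open>\<open>H\<^sub>q = J q''\<close>, so \<open>\<sigma>(z, H\<^sub>q w)\<close> is the polarisation of \<open>q\<close>.\<close>

lemma symp_form_hamilton_map: "symp_form z (hamilton_map q *v w) = bdot z (hessian q *v w)"
proof -
  have "hamilton_map q $ Inl i = hessian q $ Inr i" "hamilton_map q $ Inr i = - (hessian q $ Inl i)" for i
    by (simp_all add: vec_eq_iff hamilton_map_def hessian_def std_basis_def split: sum.split)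
  then have "symp_form z (hamilton_map q *v w) =
     (\<Sum>i\<in>UNIV. z $ Inr i * (hessian q *v w) $ Inr i + z $ Inl i * (hessian q *v w) $ Inl i)"
    unfolding symp_form_def by (intro sum.cong) (simp_all add: matrix_vector_mult_def sum_negf)
  also have "\<dots> = bdot z (hessian q *v w)"
    unfolding bdot_def sum_UNIV_Plus by (simp add: sum.distrib)
  finally show ?thesis .
qed

definition bilinear_of_coeffs ::
    "complex^'n^'n \<Rightarrow> complex^'n^'n \<Rightarrow> complex^'n^'n \<Rightarrow> (real^'n::finite) \<times> (real^'n) \<Rightarrow> (real^'n) \<times> (real^'n) \<Rightarrow> complex" where
  "bilinear_of_coeffs A C D u v = (\<Sum>i\<in>UNIV. \<Sum>j\<in>UNIV.
        A $ i $ j * of_real (fst u $ i) * of_real (fst v $ j)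
      + C $ i $ j * of_real (snd u $ i) * of_real (fst v $ j)
      + D $ i $ j * of_real (snd u $ i) * of_real (snd v $ j))"

lemma d2_bilinear_of_coeffs:
  assumes "\<And>u. q u = bilinear_of_coeffs A C D u u"
  shows "d2 q u v = bilinear_of_coeffs A C D u v + bilinear_of_coeffs A C D v u"
  by (simp add: d2_def assms bilinear_of_coeffs_def algebra_simps sum.distrib)

lemma bilinear_of_coeffs_std_basis:
  "bilinear_of_coeffs A C D (std_basis a) (std_basis b) = (case (a, b) of
      (Inl i, Inl j) \<Rightarrow> A $ i $ j | (Inr i, Inl j) \<Rightarrow> C $ i $ j
    | (Inr i, Inr j) \<Rightarrow> D $ i $ j | (Inl i, Inr j) \<Rightarrow> 0)"
proof -
  have axis: "(\<Sum>k\<in>UNIV. f k * complex_of_real (axis j 1 $ k)) = f j" for f :: "'a::finite \<Rightarrow> complex" and j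
    using sum_axis_right[of f j] by (simp add: axis_def if_distrib cong: if_cong)
  have "(\<Sum>i\<in>UNIV. \<Sum>j\<in>UNIV. F $ i $ j * of_real (axis k 1 $ i) * of_real (axis l 1 $ j)) = F $ k $ l"
    for F :: "complex^'a::finite^'a" and k l
    by (simp add: axis mult.commute[of "F $ _ $ _"] mult.assoc[symmetric])
      (simp add: axis mult.commute)
  then show ?thesis
    by (simp add: bilinear_of_coeffs_def std_basis_def ex_def exi_def sum.distrib split: sum.split)
qed

lemma quadratic_form_hessian:
  assumes "quadratic_form q"
  shows "q (x, \<xi>) = (1/2) * bdot (join (cvec x) (cvec \<xi>)) (hessian q *v join (cvec x) (cvec \<xi>))"
proof -
  obtain A C D :: "complex^'a^'a" where qf: "\<And>x \<xi>. q (x, \<xi>) = (\<Sum>i\<in>UNIV. \<Sum>j\<in>UNIV.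
        A $ i $ j * of_real (x $ i) * of_real (x $ j)
      + C $ i $ j * of_real (\<xi> $ i) * of_real (x $ j)
      + D $ i $ j * of_real (\<xi> $ i) * of_real (\<xi> $ j))"
    using assms unfolding quadratic_form_def by blast
  have qB: "q u = bilinear_of_coeffs A C D u u" for u
    by (cases u) (simp add: qf bilinear_of_coeffs_def)
  define N where "N a b = bilinear_of_coeffs A C D (std_basis a) (std_basis b)" for a b
  have H: "hessian q $ a $ b = N a b + N b a" for a b
    by (simp add: N_def hessian_def d2_bilinear_of_coeffs[OF qB])
  define z where "z = join (cvec x) (cvec \<xi>)"
  define S where "S = (\<Sum>a\<in>UNIV. \<Sum>b\<in>UNIV. z $ a * N a b * z $ b)"
  have "bdot z (hessian q *v z) = (\<Sum>a\<in>UNIV. \<Sum>b\<in>UNIV. z $ a * N a b * z $ b + z $ a * N b a * z $ b)"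
    unfolding bdot_def matrix_vector_mult_def H
    by (simp add: sum_distrib_left algebra_simps)
  also have "\<dots> = S + (\<Sum>a\<in>UNIV. \<Sum>b\<in>UNIV. z $ a * N b a * z $ b)"
    unfolding S_def by (simp add: sum.distrib)
  also have "(\<Sum>a\<in>UNIV. \<Sum>b\<in>UNIV. z $ a * N b a * z $ b) = S"
    unfolding S_def by (subst sum.swap) (simp add: mult_ac)
  also have "S = q (x, \<xi>)"
    unfolding S_def sum_UNIV_Plus z_def N_def bilinear_of_coeffs_std_basis
    by (simp add: qf cvec_def sum.distrib mult_ac)
  finally show ?thesis by (simp add: z_def)
qed

text \<open>A quadratic form vanishing on two transversal Lagrangian graphs \<open>\<xi> = G\<^sub>\<pm>x\<close> factorises:
  write \<open>(x, \<xi>) = \<phi>(v) + \<psi>(u)\<close> with \<open>\<phi>(v), \<psi>(u)\<close> on the two graphs, where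
  \<open>u = \<xi> - G\<^sub>+x\<close> and \<open>v = \<xi> - G\<^sub>-x\<close>; only the cross term survives.\<close>

lemma factor_quadratic_vanishing_on_graphs:
  fixes Gp Gm :: "complex^'n::finite^'n" and M :: "complex^('n + 'n)^('n + 'n)"
  assumes M: "transpose M = M"
    and Gp: "\<And>y. bdot (join y (Gp *v y)) (M *v join y (Gp *v y)) = 0"
    and Gm: "\<And>y. bdot (join y (Gm *v y)) (M *v join y (Gm *v y)) = 0"
    and transversal: "inj (\<lambda>y. (Gp - Gm) *v y)"
  shows "\<exists>B. \<forall>x \<xi>. (1/2) * bdot (join x \<xi>) (M *v join x \<xi>) = bdot (B *v (\<xi> - Gp *v x)) (\<xi> - Gm *v x)"
proof -
  obtain g where lg: "vec_linear g" and gD: "\<And>y. g ((Gp - Gm) *v y) = y"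
      and Dg: "\<And>v. (Gp - Gm) *v g v = v"
    using vec_linear_bij[OF _ transversal] by auto
  define \<phi> where "\<phi> v = join (g v) (Gp *v g v)" for v
  define \<psi> where "\<psi> u = join (- g u) (Gm *v (- g u))" for u
  have "vec_linear \<phi>" unfolding \<phi>_def
    by (intro vec_linear_join lg vec_linear_compose[OF _ lg]) simp
  moreover have "vec_linear \<psi>" unfolding \<psi>_def
    by (intro vec_linear_join vec_linear_compose[OF _ vec.linear_compose_neg[OF lg]]
        vec.linear_compose_neg[OF lg]) simp
  ultimately obtain P\<^sub>\<phi> P\<^sub>\<psi> where mat: "\<And>v. \<phi> v = P\<^sub>\<phi> *v v" "\<And>u. \<psi> u = P\<^sub>\<psi> *v u"
    using matrix_works by metis
  define W where "W = transpose P\<^sub>\<psi> ** M ** P\<^sub>\<phi>"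
  have "(1/2) * bdot (join x \<xi>) (M *v join x \<xi>) = bdot (transpose W *v (\<xi> - Gp *v x)) (\<xi> - Gm *v x)"
    for x \<xi>
  proof -
    define u where "u = \<xi> - Gp *v x"
    define v where "v = \<xi> - Gm *v x"
    have "v - u = (Gp - Gm) *v x" by (simp add: u_def v_def algebra_simps)
    then have gvu: "g v - g u = x" by (metis gD vec.linear_diff[OF lg])
    have "Gp *v g v = v + Gm *v g v" using Dg[of v] by (simp add: matrix_vector_mult_diff_rdistrib diff_eq_eq)
    then have "Gp *v g v + Gm *v (- g u) = v + Gm *v (g v - g u)"
      by (simp add: algebra_simps vec.linear_neg)
    then have decomp: "join x \<xi> = \<phi> v + \<psi> u"
      unfolding \<phi>_def \<psi>_def join_add using gvu by (simp add: v_def algebra_simps)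
    have "bdot (join x \<xi>) (M *v join x \<xi>) = 2 * bdot (\<psi> u) (M *v \<phi> v)"
      unfolding decomp using Gp[of "g v"] Gm[of "- g u"] bdot_symmetric_matrix[OF M, of "\<psi> u" "\<phi> v"]
      by (simp add: \<phi>_def \<psi>_def bdot_add_left bdot_add_right matrix_vector_right_distrib)
    also have "bdot (\<psi> u) (M *v \<phi> v) = bdot u (W *v v)"
      by (simp add: mat bdot_matrix_vector_mult W_def matrix_vector_mul_assoc matrix_mul_assoc)
    also have "\<dots> = bdot (transpose W *v u) v"
      by (simp only: bdot_matrix_vector_mult transpose_transpose)
    finally show ?thesis by (simp add: u_def v_def)
  qed
  then show ?thesis by blast
qed

lemma pos_def_im_mat_if_hform_graph_pos:
  fixes G :: "complex^'n::finite^'n"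
  assumes "\<forall>y. y \<noteq> 0 \<longrightarrow> hform (join y (G *v y)) > 0"
  shows "pos_def (im_mat G)"
  unfolding pos_def_def
proof (intro allI impI)
  fix y :: "real^'n" assume "y \<noteq> 0"
  then have "cvec y \<noteq> 0" by (simp add: cvec_def vec_eq_iff)
  then show "0 < y \<bullet> (im_mat G *v y)" using assms[rule_format, of "cvec y"] hform_join_cvec[of y G] by simp
qed

lemma pos_def_neg_im_mat_if_hform_graph_neg:
  fixes G :: "complex^'n::finite^'n"
  assumes "\<forall>y. y \<noteq> 0 \<longrightarrow> hform (join y (G *v y)) < 0"
  shows "pos_def (- im_mat G)"
  unfolding pos_def_def
proof (intro allI impI)
  fix y :: "real^'n" assume "y \<noteq> 0"
  then have "cvec y \<noteq> 0" by (simp add: cvec_def vec_eq_iff)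
  moreover have "- im_mat G *v y = - (im_mat G *v y)"
    by (simp add: vec_eq_iff matrix_vector_mult_def sum_negf)
  ultimately show "0 < y \<bullet> (- im_mat G *v y)" using assms[rule_format, of "cvec y"] hform_join_cvec[of y G] by simp
qed

text \<open>By \<open>\<sigma>(z, H\<^sub>q w) = z \<cdot> q'' w\<close>, the last hypotheses say that \<open>q\<close> vanishes on both graphs.\<close>

lemma supersymmetric_if_isotropic_graphs:
  fixes q :: "(real^'n::finite) \<times> (real^'n) \<Rightarrow> complex"
  assumes "quadratic_form q"
    and Gp: "transpose Gp = Gp" "\<forall>y. y \<noteq> 0 \<longrightarrow> hform (join y (Gp *v y)) > 0"
      "\<forall>y w. symp_form (join y (Gp *v y)) (hamilton_map q *v join w (Gp *v w)) = 0"
    and Gm: "transpose Gm = Gm" "\<forall>y. y \<noteq> 0 \<longrightarrow> hform (join y (Gm *v y)) < 0"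
      "\<forall>y w. symp_form (join y (Gm *v y)) (hamilton_map q *v join w (Gm *v w)) = 0"
  shows "supersymmetric q"
proof -
  have "y = 0" if "(Gp - Gm) *v y = 0" for y
    using that Gp(2) Gm(2) by (force simp: matrix_vector_mult_diff_rdistrib)
  then have "inj (\<lambda>y. (Gp - Gm) *v y)"
    by (simp add: vec.linear_inj_iff_eq_0[OF matrix_vector_mul_linear_gen])
  then obtain B where "\<And>x \<xi>. (1/2) * bdot (join x \<xi>) (hessian q *v join x \<xi>) =
      bdot (B *v (\<xi> - Gp *v x)) (\<xi> - Gm *v x)"
    using factor_quadratic_vanishing_on_graphs[OF hessian_symmetric] Gp(3) Gm(3)
    by (metis symp_form_hamilton_map)
  then show ?thesis
    unfolding supersymmetric_def using quadratic_form_hessian[OF assms(1)] Gp Gm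
      pos_def_im_mat_if_hform_graph_pos pos_def_neg_im_mat_if_hform_graph_neg by metis
qed

theorem proposition4p6:
  fixes q :: "(real^'n::finite) \<times> (real^'n) \<Rightarrow> complex"
  assumes "quadratic_form q"
    and "strictly_positive (mexp (hamilton_map q))"
  shows "supersymmetric q"
proof -
  let ?H = "hamilton_map q"
  interpret expanding "\<lambda>z. mexp ?H *v z"
    by (rule strictly_positive_imp_expanding[OF assms(2)])
  have commute: "?H *v (mexp ?H *v z) = mexp ?H *v (?H *v z)" for z
    by (simp add: matrix_vector_mul_assoc mexp_commute)
  obtain Gm :: "complex^'n^'n" where "transpose Gm = Gm"
      "\<forall>y. y \<noteq> 0 \<longrightarrow> hform (join y (Gm *v y)) < 0"
      "\<forall>y w. symp_form (join y (Gm *v y)) (?H *v join w (Gm *v w)) = 0"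
    using exists_negative_isotropic_graph[OF matrix_vector_mul_linear_gen commute] by auto
  moreover obtain Gp :: "complex^'n^'n" where "transpose Gp = Gp"
      "\<forall>y. y \<noteq> 0 \<longrightarrow> hform (join y (Gp *v y)) > 0"
      "\<forall>y w. symp_form (join y (Gp *v y)) (?H *v join w (Gp *v w)) = 0"
    using exists_positive_isotropic_graph[OF matrix_vector_mul_linear_gen commute] by auto
  ultimately show ?thesis
    using supersymmetric_if_isotropic_graphs[OF assms(1)] by blast
qed

end
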